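(* Let $\tau\in\mathcal{L}$ and $a\in\mathbb{R}$. Then $\mathcal{N}_\tau(a)\neq\mathcal{N}_\eta(a)$ if and only if every set in $\mathcal{N}_\tau(a)$ is an unbounded subset of $\mathbb{R}$.
   Context: $\eta$ denotes the Euclidean topology on $\mathbb{R}$. $\mathcal{L}$ denotes the family of all Hausdorff topologies $\tau$ on $\mathbb{R}$ with $\tau\subset\eta$. $\mathcal{N}_\tau(a)$ denotes the filter of neighborhoods of $a$ in $(\mathbb{R},\tau)$. *)

theory Defs
  imports "HOL-Analysis.Analysis"
begin

text \<open>The family L: Hausdorff topologies on the reals (with carrier all of R)
  that are coarser than the Euclidean topology.\<close>
definition coarser_Hausdorff :: "real topology \<Rightarrow> bool" where
  "coarser_Hausdorff \<tau> \<longleftrightarrow>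
     topspace \<tau> = UNIV \<and> Hausdorff_space \<tau> \<and> (\<forall>S. openin \<tau> S \<longrightarrow> open S)"

definition nbhds :: "'a topology \<Rightarrow> 'a \<Rightarrow> 'a set set" where
  "nbhds X a = {N. \<exists>U. openin X U \<and> a \<in> U \<and> U \<subseteq> N}"

end

theory Submission
  imports Defs
begin

text \<open>A topology \<tau> coarser than the Euclidean one makes the identity map from the Euclidean
  space to \<tau> continuous, so Euclidean-compact sets are \<tau>-compact and hence \<tau>-closed when \<tau> is
  Hausdorff. If some \<tau>-neighbourhood U of a is bounded, then for every \<epsilon> > 0 the set
  U minus the compact set closure U - ball a \<epsilon> is a \<tau>-open neighbourhood of a inside ball a \<epsilon>,
  so the two neighbourhood filters coincide. Conversely, if all \<tau>-neighbourhoods are unbounded,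
  the Euclidean neighbourhood ball a 1 is not one of them.\<close>

lemma nbhds_subset_nbhds_euclidean:
  assumes "\<And>S. openin X S \<Longrightarrow> open S"
  shows "nbhds X a \<subseteq> nbhds euclidean a"
  using assms unfolding nbhds_def by auto

lemma compact_imp_closedin_coarser_Hausdorff:
  fixes X :: "'a::topological_space topology"
  assumes "topspace X = UNIV" and "Hausdorff_space X" and "\<And>S. openin X S \<Longrightarrow> open S"
    and "compact C"
  shows "closedin X C"
proof -
  have "continuous_map euclidean X id"
    unfolding continuous_map_def using assms(1,3) by simp
  then have "compactin X (id ` C)"
    using image_compactin compactin_euclidean_iff \<open>compact C\<close> by blast
  then show ?thesis
    using compactin_imp_closedin[OF \<open>Hausdorff_space X\<close>] by simp
qed

lemma nbhds_eq_nbhds_euclidean_if_bounded_openin: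
  fixes X :: "'a::heine_borel topology"
  assumes "topspace X = UNIV" and "Hausdorff_space X" and coarser: "\<And>S. openin X S \<Longrightarrow> open S"
    and U: "openin X U" "a \<in> U" "bounded U"
  shows "nbhds X a = nbhds euclidean a"
proof
  show "nbhds X a \<subseteq> nbhds euclidean a"
    using nbhds_subset_nbhds_euclidean coarser by blast
next
  show "nbhds euclidean a \<subseteq> nbhds X a"
  proof
    fix M assume "M \<in> nbhds euclidean a"
    then obtain W where W: "open W" "a \<in> W" "W \<subseteq> M"
      unfolding nbhds_def by auto
    then obtain e where "e > 0" "ball a e \<subseteq> W"
      using open_contains_ball by blast
    define C where "C = closure U - ball a e"
    have "compact C"
      unfolding C_def using \<open>bounded U\<close>
      by (simp add: Diff_eq compact_Int_closed compact_closure closed_Compl)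
    then have "closedin X C"
      using compact_imp_closedin_coarser_Hausdorff assms(1,2) coarser by blast
    then have "openin X (U - C)"
      using U(1) by (simp add: openin_diff)
    moreover have "a \<in> U - C"
      using U(2) \<open>e > 0\<close> unfolding C_def by auto
    moreover have "U - C \<subseteq> M"
      using W(3) \<open>ball a e \<subseteq> W\<close> closure_subset unfolding C_def by blast
    ultimately show "M \<in> nbhds X a"
      unfolding nbhds_def by blast
  qed
qed

theorem proposition1:
  fixes \<tau> :: "real topology" and a :: real
  assumes "coarser_Hausdorff \<tau>"
  shows "nbhds \<tau> a \<noteq> nbhds euclidean a \<longleftrightarrow> (\<forall>N \<in> nbhds \<tau> a. \<not> bounded N)"
proof
  have \<tau>: "topspace \<tau> = UNIV" "Hausdorff_space \<tau>" "\<And>S. openin \<tau> S \<Longrightarrow> open S"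
    using assms unfolding coarser_Hausdorff_def by auto
  assume "nbhds \<tau> a \<noteq> nbhds euclidean a"
  show "\<forall>N \<in> nbhds \<tau> a. \<not> bounded N"
  proof (intro ballI notI)
    fix N assume "N \<in> nbhds \<tau> a" "bounded N"
    then obtain U where "openin \<tau> U" "a \<in> U" "bounded U"
      unfolding nbhds_def using bounded_subset by blast
    then have "nbhds \<tau> a = nbhds euclidean a"
      using nbhds_eq_nbhds_euclidean_if_bounded_openin \<tau> by blast
    with \<open>nbhds \<tau> a \<noteq> nbhds euclidean a\<close> show False ..
  qed
next
  assume "\<forall>N \<in> nbhds \<tau> a. \<not> bounded N"
  moreover have "ball a 1 \<in> nbhds euclidean a"
    unfolding nbhds_def by (auto intro!: exI[of _ "ball a 1"])
  ultimately show "nbhds \<tau> a \<noteq> nbhds euclidean a"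
    by auto
qed

end
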